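(* Let $\alpha<\omega_1$, $K\ge1$, $X\subseteq W$ a block subspace and $(z_n)$ a block sequence in $W$ such that II has a strategy in $G^\alpha_X$ to play $(y_0,\dots,y_k)$ satisfying $(y_0,\dots,y_k)\sim_K(z_0,\dots,z_k)$. Then for every block subspace $Y\subseteq X$, ${\rm rank}\big(T((z_n),Y,K)\big)>\alpha$.
   Context: Let $\mathcal W$ be a real Banach space with Schauder basis $(e_n)$. Fix a countable subfield $\mathfrak F\subseteq\mathbb R$ such that $\|\sum_{n\le m}a_ne_n\|\in\mathfrak F$ whenever all $a_n\in\mathfrak F$, and let $W$ be the $\mathfrak F$-vector space of finite $\mathfrak F$-linear combinations of the $e_n$, with the norm of $\mathcal W$; subspaces are $\mathfrak F$-linear in $W$. For nonzero $x=\sum a_ne_n$, ${\rm supp}(x)=\{n:a_n\neq0\}$, and $x<y$ means $\max{\rm supp}(x)<\min{\rm supp}(y)$. A block sequence is a sequence of nonzero vectors $x_0<x_1<\dots$; a block subspace is the span of an infinite block sequence. $(x_i)_{i\le k}\sim_K(y_i)_{i\le k}$ means $\frac1K\|\sum a_ix_i\|\le\|\sum a_iy_i\|\le K\|\sum a_ix_i\|$ for all real $a_i$. $T((z_n),Y,K)$ is the tree of all finite sequences $(y_0,\dots,y_k)$ of vectors of $Y$, including the empty one, with $(y_0,\dots,y_k)\sim_K(z_0,\dots,z_k)$. For a well-founded tree $T$, $\rho_T(s)=\sup\{\rho_T(t)+1:s\prec t\in T\}$ ($0$ at terminal nodes) and ${\rm rank}(T)=\sup\{\rho_T(s)+1:s\in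 T\}$; ill-founded trees have rank $\infty$, with $\beta<\infty$ for every ordinal $\beta$. Game $G^\alpha_X$: in rounds $l=0,1,\dots$, I plays a block subspace $Y_l\subseteq X$ and an ordinal $\xi_l$ with $\xi_0<\alpha$ and $\xi_l<\xi_{l-1}$ for $l\ge1$; II plays a finite-dimensional subspace $F_l\subseteq Y_l$ and a nonzero $y_l\in F_0+\dots+F_l$; the game ends after II's response in the round $k$ with $\xi_k=0$ (immediately with empty outcome if $\alpha=0$); outcome $(y_0,\dots,y_k)$. "II has a strategy to play ... satisfying P" means II can ensure the outcome satisfies P. *)

theory Defs
  imports "HOL-Analysis.Analysis" "HOL-Library.Sublist"
begin

definition schauder_basis :: "(nat \<Rightarrow> 'a::banach) \<Rightarrow> bool" where
  "schauder_basis e \<longleftrightarrow> (\<forall>x. \<exists>!c::nat \<Rightarrow> real. (\<lambda>m. \<Sum>n<m. c n *\<^sub>R e n) \<longlonglongrightarrow> x)"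

definition sb_coeff :: "(nat \<Rightarrow> 'a::banach) \<Rightarrow> 'a \<Rightarrow> nat \<Rightarrow> real" where
  "sb_coeff e x = (THE c. (\<lambda>m. \<Sum>n<m. c n *\<^sub>R e n) \<longlonglongrightarrow> x)"

definition countable_subfield :: "real set \<Rightarrow> bool" where
  "countable_subfield F \<longleftrightarrow> countable F \<and> 0 \<in> F \<and> 1 \<in> F \<and>
     (\<forall>a\<in>F. \<forall>b\<in>F. a + b \<in> F \<and> a * b \<in> F) \<and> (\<forall>a\<in>F. - a \<in> F) \<and>
     (\<forall>a\<in>F. a \<noteq> 0 \<longrightarrow> inverse a \<in> F)"

definition norm_closed :: "real set \<Rightarrow> (nat \<Rightarrow> 'a::banach) \<Rightarrow> bool" where
  "norm_closed F e \<longleftrightarrow> (\<forall>(a::nat \<Rightarrow> real) m. (\<forall>n\<le>m. a n \<in> F) \<longrightarrow> norm (\<Sum>n\<le>m. a n *\<^sub>R e n) \<in> F)"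

definition Fspan :: "real set \<Rightarrow> 'a::real_vector set \<Rightarrow> 'a set" where
  "Fspan F A = {y. \<exists>S c. finite S \<and> S \<subseteq> A \<and> (\<forall>v\<in>S. c v \<in> F) \<and> y = (\<Sum>v\<in>S. c v *\<^sub>R v)}"

definition Wsp :: "real set \<Rightarrow> (nat \<Rightarrow> 'a::banach) \<Rightarrow> 'a set" where
  "Wsp F e = Fspan F (range e)"

definition Fsubspace :: "real set \<Rightarrow> 'a::real_vector set \<Rightarrow> 'a set \<Rightarrow> bool" where
  "Fsubspace F U V \<longleftrightarrow> V \<subseteq> U \<and> 0 \<in> V \<and> (\<forall>x\<in>V. \<forall>y\<in>V. x + y \<in> V) \<and> (\<forall>c\<in>F. \<forall>x\<in>V. c *\<^sub>R x \<in> V)"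

definition fd_subspace :: "real set \<Rightarrow> 'a::real_vector set \<Rightarrow> 'a set \<Rightarrow> bool" where
  "fd_subspace F V Y \<longleftrightarrow> Fsubspace F Y V \<and> (\<exists>S. finite S \<and> V = Fspan F S)"

definition supp :: "(nat \<Rightarrow> 'a::banach) \<Rightarrow> 'a \<Rightarrow> nat set" where
  "supp e x = {n. sb_coeff e x n \<noteq> 0}"

definition block_lt :: "(nat \<Rightarrow> 'a::banach) \<Rightarrow> 'a \<Rightarrow> 'a \<Rightarrow> bool" where
  "block_lt e x y \<longleftrightarrow> Max (supp e x) < Min (supp e y)"

definition block_seq :: "real set \<Rightarrow> (nat \<Rightarrow> 'a::banach) \<Rightarrow> (nat \<Rightarrow> 'a) \<Rightarrow> bool" where
  "block_seq F e x \<longleftrightarrow> (\<forall>i. x i \<in> Wsp F e \<and> x i \<noteq> 0) \<and> (\<forall>i. block_lt e (x i) (x (Suc i)))"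

definition block_subspace :: "real set \<Rightarrow> (nat \<Rightarrow> 'a::banach) \<Rightarrow> 'a set \<Rightarrow> bool" where
  "block_subspace F e Y \<longleftrightarrow> (\<exists>x. block_seq F e x \<and> Y = Fspan F (range x))"

text \<open>(y_0,...,y_k) ~_K (z_0,...,z_k), k+1 = length ys.\<close>
definition sim_K :: "real \<Rightarrow> 'a::real_normed_vector list \<Rightarrow> (nat \<Rightarrow> 'a) \<Rightarrow> bool" where
  "sim_K K ys z \<longleftrightarrow> (\<forall>a::nat \<Rightarrow> real.
     (1 / K) * norm (\<Sum>i<length ys. a i *\<^sub>R z i) \<le> norm (\<Sum>i<length ys. a i *\<^sub>R (ys ! i)) \<and>
     norm (\<Sum>i<length ys. a i *\<^sub>R (ys ! i)) \<le> K * norm (\<Sum>i<length ys. a i *\<^sub>R z i))"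

definition Ttree :: "(nat \<Rightarrow> 'a::real_normed_vector) \<Rightarrow> 'a set \<Rightarrow> real \<Rightarrow> 'a list set" where
  "Ttree z Y K = {ys. set ys \<subseteq> Y \<and> sim_K K ys z}"

text \<open>An ordinal alpha is represented by a well-order; ordinals smaller than alpha
  correspond to elements b of Field alpha (order type of the strict initial segment below b).\<close>

definition ord_lt :: "'b rel \<Rightarrow> 'b \<Rightarrow> 'b \<Rightarrow> bool" where
  "ord_lt \<alpha> b a \<longleftrightarrow> (b, a) \<in> \<alpha> \<and> b \<noteq> a"

definition ord_zero :: "'b rel \<Rightarrow> 'b \<Rightarrow> bool" where
  "ord_zero \<alpha> \<xi> \<longleftrightarrow> \<xi> \<in> Field \<alpha> \<and> (\<forall>b. \<not> ord_lt \<alpha> b \<xi>)"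

text \<open>rho_ge T alpha s b: rho_T(s) \<ge> (ordinal represented by b); this unfolds
  rho_T(s) = sup { rho_T(t)+1 : s \<prec> t \<in> T }.\<close>
inductive rho_ge :: "'a list set \<Rightarrow> 'b rel \<Rightarrow> 'a list \<Rightarrow> 'b \<Rightarrow> bool" for T \<alpha> where
  "\<lbrakk> b \<in> Field \<alpha>;
     \<forall>c. ord_lt \<alpha> c b \<longrightarrow> (\<exists>t\<in>T. strict_prefix s t \<and> rho_ge T \<alpha> t c) \<rbrakk>
   \<Longrightarrow> rho_ge T \<alpha> s b"

definition rho_ge_top :: "'a list set \<Rightarrow> 'b rel \<Rightarrow> 'a list \<Rightarrow> bool" where
  "rho_ge_top T \<alpha> s \<longleftrightarrow> (\<forall>c\<in>Field \<alpha>. \<exists>t\<in>T. strict_prefix s t \<and> rho_ge T \<alpha> t c)"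

definition ill_founded :: "'a list set \<Rightarrow> bool" where
  "ill_founded T \<longleftrightarrow> (\<exists>f. \<forall>n. f n \<in> T \<and> strict_prefix (f n) (f (Suc n)))"

text \<open>rank(T) > alpha: either T is ill-founded (rank = infinity), or
  sup { rho_T(s)+1 : s \<in> T } > alpha, i.e. some s has rho_T(s) \<ge> alpha.\<close>
definition rank_gt :: "'a list set \<Rightarrow> 'b rel \<Rightarrow> bool" where
  "rank_gt T \<alpha> \<longleftrightarrow> ill_founded T \<or> (\<exists>s\<in>T. rho_ge_top T \<alpha> s)"

text \<open>Legal sequences of moves of player I, [(Y_0,xi_0),...,(Y_l,xi_l)], where the game
  has not ended before round l.\<close>
definition I_legal :: "real set \<Rightarrow> (nat \<Rightarrow> 'a::banach) \<Rightarrow> 'b rel \<Rightarrow> 'a set \<Rightarrow> ('a set \<times> 'b) list \<Rightarrow> bool" where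
  "I_legal F e \<alpha> X ps \<longleftrightarrow> ps \<noteq> [] \<and>
     (\<forall>j<length ps. block_subspace F e (fst (ps ! j)) \<and> fst (ps ! j) \<subseteq> X) \<and>
     snd (ps ! 0) \<in> Field \<alpha> \<and>
     (\<forall>j. 0 < j \<and> j < length ps \<longrightarrow> ord_lt \<alpha> (snd (ps ! j)) (snd (ps ! (j - 1)))) \<and>
     (\<forall>j. j + 1 < length ps \<longrightarrow> \<not> ord_zero \<alpha> (snd (ps ! j)))"

definition subsum :: "(nat \<Rightarrow> 'a::real_vector set) \<Rightarrow> nat \<Rightarrow> 'a set" where
  "subsum Fs l = {y. \<exists>v. (\<forall>j\<le>l. v j \<in> Fs j) \<and> y = (\<Sum>j\<le>l. v j)}"

text \<open>A strategy for II maps the history of I's moves to II's answer (F_l, y_l);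
  II's earlier answers are determined by the strategy itself.\<close>
definition II_strategy_wins ::
  "real set \<Rightarrow> (nat \<Rightarrow> 'a::banach) \<Rightarrow> 'b rel \<Rightarrow> 'a set \<Rightarrow> ('a list \<Rightarrow> bool)
   \<Rightarrow> (('a set \<times> 'b) list \<Rightarrow> 'a set \<times> 'a) \<Rightarrow> bool" where
  "II_strategy_wins F e \<alpha> X P \<sigma> \<longleftrightarrow>
     (Field \<alpha> = {} \<longrightarrow> P []) \<and>
     (\<forall>ps. I_legal F e \<alpha> X ps \<longrightarrow>
        (let l = length ps - 1; r = (\<lambda>j. \<sigma> (take (Suc j) ps)) in
          fd_subspace F (fst (r l)) (fst (ps ! l)) \<and>
          snd (r l) \<noteq> 0 \<and>
          snd (r l) \<in> subsum (\<lambda>j. fst (r j)) l \<and>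
          (ord_zero \<alpha> (snd (ps ! l)) \<longrightarrow> P (map (\<lambda>j. snd (r j)) [0..<Suc l]))))"

definition II_has_strategy ::
  "real set \<Rightarrow> (nat \<Rightarrow> 'a::banach) \<Rightarrow> 'b rel \<Rightarrow> 'a set \<Rightarrow> ('a list \<Rightarrow> bool) \<Rightarrow> bool" where
  "II_has_strategy F e \<alpha> X P \<longleftrightarrow> (\<exists>\<sigma>. II_strategy_wins F e \<alpha> X P \<sigma>)"

end

theory Submission
  imports Defs
begin

text \<open>Let I play the fixed block subspace Y in every round and let II answer with the winning
  strategy. By well-founded induction on the last ordinal \<xi> played by I, the sequence of II's
  answers is a node of the tree whose \<rho>-rank is at least \<xi>: if \<xi> = 0 the game ends and the
  answers satisfy the winning condition, and otherwise every \<xi>' < \<xi> is a legal next move for I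
  whose answers extend the current node. Since I may open with any ordinal below \<alpha>, the root has
  \<rho>-rank at least \<alpha>.\<close>

lemma Fspan_zero: "0 \<in> Fspan F A"
  unfolding Fspan_def by (rule CollectI, rule exI[of _ "{}"]) auto

lemma Fspan_add:
  assumes F: "countable_subfield F" and x: "x \<in> Fspan F A" and y: "y \<in> Fspan F A"
  shows "x + y \<in> Fspan F A"
proof -
  obtain S1 c1 where 1: "finite S1" "S1 \<subseteq> A" "\<forall>v\<in>S1. c1 v \<in> F" "x = (\<Sum>v\<in>S1. c1 v *\<^sub>R v)"
    using x unfolding Fspan_def by blast
  obtain S2 c2 where 2: "finite S2" "S2 \<subseteq> A" "\<forall>v\<in>S2. c2 v \<in> F" "y = (\<Sum>v\<in>S2. c2 v *\<^sub>R v)"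
    using y unfolding Fspan_def by blast
  define d1 where "d1 v = (if v \<in> S1 then c1 v else 0)" for v
  define d2 where "d2 v = (if v \<in> S2 then c2 v else 0)" for v
  have "(\<Sum>v\<in>S1 \<union> S2. d1 v *\<^sub>R v) = x"
    unfolding 1(4) d1_def by (rule sum.mono_neutral_cong_right) (use 1 2 in auto)
  moreover have "(\<Sum>v\<in>S1 \<union> S2. d2 v *\<^sub>R v) = y"
    unfolding 2(4) d2_def by (rule sum.mono_neutral_cong_right) (use 1 2 in auto)
  ultimately have "x + y = (\<Sum>v\<in>S1 \<union> S2. (d1 v + d2 v) *\<^sub>R v)"
    by (simp add: scaleR_add_left sum.distrib)
  moreover have "\<forall>v\<in>S1 \<union> S2. d1 v + d2 v \<in> F"
    using F 1(3) 2(3) unfolding countable_subfield_def d1_def d2_def by auto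
  ultimately show ?thesis
    unfolding Fspan_def using 1 2
    by (intro CollectI exI[of _ "S1 \<union> S2"] exI[of _ "\<lambda>v. d1 v + d2 v"]) auto
qed

lemma Fspan_sum:
  assumes F: "countable_subfield F" and "finite I" and "\<forall>i\<in>I. v i \<in> Fspan F A"
  shows "sum v I \<in> Fspan F A"
  using assms(2,3) by (induction I rule: finite_induct) (auto simp: Fspan_zero Fspan_add[OF F])

lemma subsum_subset_Fspan:
  assumes "countable_subfield F" and "\<forall>j\<le>l. Fs j \<subseteq> Fspan F A"
  shows "subsum Fs l \<subseteq> Fspan F A"
  using assms unfolding subsum_def by (auto intro!: Fspan_sum)

lemma sim_K_appendD:
  assumes "sim_K K (ys @ zs) z"
  shows "sim_K K ys z"
  unfolding sim_K_def
proof
  fix a :: "nat \<Rightarrow> real"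
  define a' where "a' i = (if i < length ys then a i else 0)" for i
  have "(\<Sum>i<length (ys @ zs). a' i *\<^sub>R z i) = (\<Sum>i<length ys. a i *\<^sub>R z i)"
    unfolding a'_def by (rule sum.mono_neutral_cong_right) auto
  moreover have "(\<Sum>i<length (ys @ zs). a' i *\<^sub>R (ys @ zs) ! i) = (\<Sum>i<length ys. a i *\<^sub>R ys ! i)"
    unfolding a'_def by (rule sum.mono_neutral_cong_right) (auto simp: nth_append)
  ultimately show "1 / K * norm (\<Sum>i<length ys. a i *\<^sub>R z i) \<le> norm (\<Sum>i<length ys. a i *\<^sub>R ys ! i) \<and>
      norm (\<Sum>i<length ys. a i *\<^sub>R ys ! i) \<le> K * norm (\<Sum>i<length ys. a i *\<^sub>R z i)"
    using assms[unfolded sim_K_def, rule_format, of a'] by simp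
qed

lemma sim_K_Nil: "sim_K K [] z"
  unfolding sim_K_def by simp

lemma I_legal_take:
  assumes "I_legal F e \<alpha> X ps" and "0 < n"
  shows "I_legal F e \<alpha> X (take n ps)"
  using assms unfolding I_legal_def by auto

lemma I_legal_singleton:
  assumes "block_subspace F e Y" and "Y \<subseteq> X" and "\<xi> \<in> Field \<alpha>"
  shows "I_legal F e \<alpha> X [(Y, \<xi>)]"
  using assms unfolding I_legal_def by auto

lemma I_legal_last_in_Field:
  assumes "I_legal F e \<alpha> X ps"
  shows "snd (last ps) \<in> Field \<alpha>"
proof (cases "length ps = 1")
  case True
  then show ?thesis
    using assms unfolding I_legal_def by (simp add: last_conv_nth)
next
  case False
  have "ps \<noteq> []"
    using assms unfolding I_legal_def by blast
  with False have "length ps - 1 > 0"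
    by (cases ps) auto
  with assms have "ord_lt \<alpha> (snd (ps ! (length ps - 1))) (snd (ps ! (length ps - 1 - 1)))"
    unfolding I_legal_def by (elim conjE allE[of _ "length ps - 1"]) auto
  with \<open>ps \<noteq> []\<close> show ?thesis
    unfolding ord_lt_def by (auto simp: last_conv_nth intro: FieldI1)
qed

lemma I_legal_snoc:
  assumes ps: "I_legal F e \<alpha> X ps" and Y: "block_subspace F e Y" "Y \<subseteq> X"
    and lt: "ord_lt \<alpha> \<xi> (snd (last ps))"
  shows "I_legal F e \<alpha> X (ps @ [(Y, \<xi>)])"
proof -
  let ?qs = "ps @ [(Y, \<xi>)]"
  have ne: "ps \<noteq> []" and last: "last ps = ps ! (length ps - 1)"
    using ps unfolding I_legal_def by (auto simp: last_conv_nth)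
  show ?thesis
    unfolding I_legal_def
  proof (intro conjI allI impI)
    fix j assume "j < length ?qs"
    then show "block_subspace F e (fst (?qs ! j))"
      using ps Y unfolding I_legal_def by (auto simp: nth_append less_Suc_eq)
  next
    fix j assume "j < length ?qs"
    then show "fst (?qs ! j) \<subseteq> X"
      using ps Y unfolding I_legal_def by (auto simp: nth_append less_Suc_eq)
  next
    show "snd (?qs ! 0) \<in> Field \<alpha>"
      using ps ne unfolding I_legal_def by (simp add: nth_append)
  next
    fix j assume j: "0 < j \<and> j < length ?qs"
    then consider "j < length ps" | "j = length ps" by force
    then show "ord_lt \<alpha> (snd (?qs ! j)) (snd (?qs ! (j - 1)))"
    proof cases
      case 1
      then show ?thesis using ps j unfolding I_legal_def by (auto simp: nth_append)
    next
      case 2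
      then show ?thesis using lt ne last j by (simp add: nth_append)
    qed
  next
    fix j assume j: "j + 1 < length ?qs"
    then consider "j + 1 < length ps" | "j = length ps - 1" by force
    then show "\<not> ord_zero \<alpha> (snd (?qs ! j))"
    proof cases
      case 1
      then show ?thesis using ps unfolding I_legal_def by (simp add: nth_append)
    next
      case 2
      then show ?thesis using lt ne last j unfolding ord_zero_def by (auto simp: nth_append)
    qed
  qed simp
qed

definition II_answers :: "(('a set \<times> 'b) list \<Rightarrow> 'a set \<times> 'a) \<Rightarrow> ('a set \<times> 'b) list \<Rightarrow> 'a list" where
  "II_answers \<sigma> ps = map (\<lambda>j. snd (\<sigma> (take (Suc j) ps))) [0..<length ps]"

lemma II_answers_snoc: "II_answers \<sigma> (ps @ [q]) = II_answers \<sigma> ps @ [snd (\<sigma> (ps @ [q]))]"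
  unfolding II_answers_def by auto

lemma II_strategy_wins_move:
  assumes "II_strategy_wins F e \<alpha> X P \<sigma>" and "I_legal F e \<alpha> X qs" and "length qs = Suc l"
  shows "fd_subspace F (fst (\<sigma> qs)) (fst (qs ! l))"
    and "snd (\<sigma> qs) \<in> subsum (\<lambda>j. fst (\<sigma> (take (Suc j) qs))) l"
  using assms(1)[unfolded II_strategy_wins_def, THEN conjunct2, rule_format, OF assms(2)] assms(3)
  by (simp_all add: Let_def)

lemma II_strategy_wins_outcome:
  assumes "II_strategy_wins F e \<alpha> X P \<sigma>" and "I_legal F e \<alpha> X qs"
    and "ord_zero \<alpha> (snd (last qs))"
  shows "P (II_answers \<sigma> qs)"
proof -
  obtain l where l: "length qs = Suc l"
    using assms(2) unfolding I_legal_def by (cases qs) auto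
  then have "last qs = qs ! l"
    by (metis diff_Suc_1 last_conv_nth list.size(3) nat.distinct(1))
  then show ?thesis
    using assms(1)[unfolded II_strategy_wins_def, THEN conjunct2, rule_format, OF assms(2)] assms(3) l
    by (simp add: Let_def II_answers_def del: upt_Suc)
qed

lemma II_answers_subset:
  assumes F: "countable_subfield F" and W: "II_strategy_wins F e \<alpha> X P \<sigma>"
    and ps: "I_legal F e \<alpha> X ps" and moves: "\<forall>p\<in>set ps. fst p = Fspan F A"
  shows "set (II_answers \<sigma> ps) \<subseteq> Fspan F A"
proof
  fix y assume "y \<in> set (II_answers \<sigma> ps)"
  then obtain j where j: "j < length ps" and y: "y = snd (\<sigma> (take (Suc j) ps))"
    unfolding II_answers_def by auto
  have "fst (\<sigma> (take (Suc i) ps)) \<subseteq> Fspan F A" if "i \<le> j" for i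
  proof -
    have "fd_subspace F (fst (\<sigma> (take (Suc i) ps))) (fst (take (Suc i) ps ! i))"
      using II_strategy_wins_move(1)[OF W I_legal_take[OF ps]] that j by simp
    moreover have "fst (take (Suc i) ps ! i) = Fspan F A"
      using moves that j by auto
    ultimately show ?thesis
      by (simp add: fd_subspace_def Fsubspace_def)
  qed
  then have "subsum (\<lambda>i. fst (\<sigma> (take (Suc i) (take (Suc j) ps)))) j \<subseteq> Fspan F A"
    by (intro subsum_subset_Fspan[OF F]) (simp add: min_def)
  moreover have "length (take (Suc j) ps) = Suc j"
    using j by simp
  from II_strategy_wins_move(2)[OF W I_legal_take[OF ps zero_less_Suc] this]
  have "y \<in> subsum (\<lambda>i. fst (\<sigma> (take (Suc i) (take (Suc j) ps)))) j"
    using y by simp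
  ultimately show "y \<in> Fspan F A" by blast
qed

lemma II_answers_rho_ge:
  assumes F: "countable_subfield F" and wf: "wf (\<alpha> - Id)"
    and W: "II_strategy_wins F e \<alpha> X P \<sigma>"
    and P_prefix: "\<And>ys zs. P (ys @ zs) \<Longrightarrow> P ys"
    and Y: "block_subspace F e Y" "Y \<subseteq> X"
    and ps: "I_legal F e \<alpha> X ps" and moves: "\<forall>p\<in>set ps. fst p = Y"
  defines "T \<equiv> {ys. set ys \<subseteq> Y \<and> P ys}"
  shows "II_answers \<sigma> ps \<in> T \<and> rho_ge T \<alpha> (II_answers \<sigma> ps) (snd (last ps))"
  using ps moves
proof (induction "snd (last ps)" arbitrary: ps rule: wf_induct_rule[OF wf])
  case (1 ps)
  have extend: "II_answers \<sigma> (ps @ [(Y, \<xi>)]) \<in> T \<and> rho_ge T \<alpha> (II_answers \<sigma> (ps @ [(Y, \<xi>)])) \<xi>"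
    if lt: "ord_lt \<alpha> \<xi> (snd (last ps))" for \<xi>
    using 1(1)[of "ps @ [(Y, \<xi>)]"] 1(3) I_legal_snoc[OF 1(2) Y lt] lt
    unfolding ord_lt_def by auto
  have "II_answers \<sigma> ps \<in> T"
  proof (cases "ord_zero \<alpha> (snd (last ps))")
    case True
    obtain A where "Y = Fspan F A"
      using Y(1) unfolding block_subspace_def by blast
    then show ?thesis
      using II_strategy_wins_outcome[OF W 1(2) True] II_answers_subset[OF F W 1(2)] 1(3)
      unfolding T_def by auto
  next
    case False
    then obtain \<xi> where "ord_lt \<alpha> \<xi> (snd (last ps))"
      using I_legal_last_in_Field[OF 1(2)] unfolding ord_zero_def by blast
    then have "II_answers \<sigma> ps @ [snd (\<sigma> (ps @ [(Y, \<xi>)]))] \<in> T"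
      using extend unfolding II_answers_snoc by blast
    then show ?thesis
      unfolding T_def using P_prefix[of "II_answers \<sigma> ps"] by auto
  qed
  moreover have "rho_ge T \<alpha> (II_answers \<sigma> ps) (snd (last ps))"
  proof (rule rho_ge.intros)
    show "snd (last ps) \<in> Field \<alpha>"
      using I_legal_last_in_Field[OF 1(2)] .
    show "\<forall>\<xi>. ord_lt \<alpha> \<xi> (snd (last ps)) \<longrightarrow>
        (\<exists>t\<in>T. strict_prefix (II_answers \<sigma> ps) t \<and> rho_ge T \<alpha> t \<xi>)"
      using extend unfolding II_answers_snoc by (blast intro: strict_prefixI')
  qed
  ultimately show ?case by blast
qed

theorem rank_gt_of_II_has_strategy:
  assumes F: "countable_subfield F" and "Well_order \<alpha>"
    and S: "II_has_strategy F e \<alpha> X P"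
    and P_Nil: "P []" and P_prefix: "\<And>ys zs. P (ys @ zs) \<Longrightarrow> P ys"
    and Y: "block_subspace F e Y" "Y \<subseteq> X"
  shows "rank_gt {ys. set ys \<subseteq> Y \<and> P ys} \<alpha>"
proof -
  let ?T = "{ys. set ys \<subseteq> Y \<and> P ys}"
  obtain \<sigma> where W: "II_strategy_wins F e \<alpha> X P \<sigma>"
    using S unfolding II_has_strategy_def by blast
  have wf: "wf (\<alpha> - Id)"
    using \<open>Well_order \<alpha>\<close> unfolding well_order_on_def by blast
  have "rho_ge_top ?T \<alpha> []"
    unfolding rho_ge_top_def
  proof
    fix \<xi> assume "\<xi> \<in> Field \<alpha>"
    then have "I_legal F e \<alpha> X [(Y, \<xi>)]"
      by (rule I_legal_singleton[OF Y])
    from II_answers_rho_ge[where P = P, OF F wf W P_prefix Y this]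
    have "II_answers \<sigma> [(Y, \<xi>)] \<in> ?T \<and> rho_ge ?T \<alpha> (II_answers \<sigma> [(Y, \<xi>)]) \<xi>"
      by simp
    moreover have "strict_prefix [] (II_answers \<sigma> [(Y, \<xi>)])"
      by (simp add: II_answers_def)
    ultimately show "\<exists>t\<in>?T. strict_prefix [] t \<and> rho_ge ?T \<alpha> t \<xi>"
      by blast
  qed
  moreover have "[] \<in> ?T" using P_Nil by simp
  ultimately show ?thesis unfolding rank_gt_def by blast
qed

theorem lemma4p8:
  fixes e :: "nat \<Rightarrow> 'a::banach" and F :: "real set" and \<alpha> :: "'b rel"
    and K :: real and X :: "'a set" and z :: "nat \<Rightarrow> 'a"
  assumes "schauder_basis e"
    and "countable_subfield F"
    and "norm_closed F e"
    and "Well_order \<alpha>" and "countable (Field \<alpha>)"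
    and "K \<ge> 1"
    and "block_subspace F e X"
    and "block_seq F e z"
    and "II_has_strategy F e \<alpha> X (\<lambda>ys. sim_K K ys z)"
  shows "\<forall>Y. block_subspace F e Y \<and> Y \<subseteq> X \<longrightarrow> rank_gt (Ttree z Y K) \<alpha>"
proof (intro allI impI)
  fix Y assume Y: "block_subspace F e Y \<and> Y \<subseteq> X"
  have "rank_gt {ys. set ys \<subseteq> Y \<and> sim_K K ys z} \<alpha>"
  proof (rule rank_gt_of_II_has_strategy[OF assms(2,4,9) sim_K_Nil])
    show "\<And>ys zs. sim_K K (ys @ zs) z \<Longrightarrow> sim_K K ys z"
      by (rule sim_K_appendD)
  qed (use Y in auto)
  then show "rank_gt (Ttree z Y K) \<alpha>"
    unfolding Ttree_def .
qed

end
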